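(* Let $(V,\le,\preccurlyeq)$ be a mixed lattice vector space equipped with a vector topology $\tau$. Consider: (a) $\tau$ is locally symmetric-solid; (b) $\tau$ is locally $(\le)$-full and the mixed lattice operations are continuous at zero; (c) the mixed lattice operations $(x,y)\mapsto x\curlyvee y$ and $(x,y)\mapsto x\curlywedge y$ are uniformly continuous; (d) $\tau$ is locally mixed-full and the mixed lattice operations are continuous at zero. Then (a) and (b) are equivalent, each of them implies (c), and (c) implies (d).
   Context: A mixed lattice vector space $(V,\le,\preccurlyeq)$ is a real vector space $V$ with two partial orderings $\le$ (initial order) and $\preccurlyeq$ (specific order), each making $V$ a partially ordered vector space, with positive cones $V_p=\{x:0\le x\}$, $V_{sp}=\{x:0\preccurlyeq x\}$, such that: (1) for all $x,y$ the elements $x\curlyvee y=\min\{w: w\succcurlyeq x,\ w\ge y\}$ and $x\curlywedge y=\max\{w: w\preccurlyeq x,\ w\le y\}$ exist (min/max with respect to $\le$); (2) $x\preccurlyeq y$ implies $x\le y$; (3) $x\curlyvee y, x\curlywedge y\in V_{sp}$ whenever $x,y\in V_{sp}$. The mixed lattice operations are $(x,y)\mapsto x\curlyvee y$ and $(x,y)\mapsto x\curlywedge y$; "continuous at zero" means continuous at $(0,0)$. Notation: $x^u=0\curlyvee x$, $x^l=0\curlyvee(-x)$, $s(x)=x^u+x^l$. A set $A$ is symmetric-solid if $x\in A$ and $s(y)\le s(x)$ imply $y\in A$; it is $(\le)$-full if $x,y\in A$ and $y\le z\le x$ imply $z\in A$. $\tau$ is locally symmetric-solid (resp. locally $(\le)$-full)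 if it has a base of neighborhoods of zero consisting of symmetric-solid (resp. $(\le)$-full) sets. $\tau$ is locally mixed-full if every neighborhood of zero contains a neighborhood $W$ of zero such that $y\in W$ and $0\preccurlyeq x\le y$ imply $x\in W$. Uniform continuity of $g:V\times V\to V$: for each neighborhood $W$ of $0$ there is a neighborhood $U$ of $0$ such that $x-x'\in U$, $y-y'\in U$ imply $g(x,y)-g(x',y')\in W$. *)

theory Defs
  imports "HOL-Analysis.Analysis"
begin

text \<open>Orders are given as relations on a real vector space 'a.
  le = initial order (\<le>), sle = specific order (\<preccurlyeq>).\<close>

definition partial_order_rel :: "('a \<Rightarrow> 'a \<Rightarrow> bool) \<Rightarrow> bool" where
  "partial_order_rel r \<longleftrightarrow> (\<forall>x. r x x) \<and> (\<forall>x y. r x y \<and> r y x \<longrightarrow> x = y)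
     \<and> (\<forall>x y z. r x y \<and> r y z \<longrightarrow> r x z)"

definition ordered_vector_space :: "('a::real_vector \<Rightarrow> 'a \<Rightarrow> bool) \<Rightarrow> bool" where
  "ordered_vector_space r \<longleftrightarrow> partial_order_rel r
     \<and> (\<forall>x y z. r x y \<longrightarrow> r (x + z) (y + z))
     \<and> (\<forall>x y (c::real). r x y \<and> 0 \<le> c \<longrightarrow> r (c *\<^sub>R x) (c *\<^sub>R y))"

definition is_least_rel :: "('a \<Rightarrow> 'a \<Rightarrow> bool) \<Rightarrow> 'a set \<Rightarrow> 'a \<Rightarrow> bool" where
  "is_least_rel r A m \<longleftrightarrow> m \<in> A \<and> (\<forall>w\<in>A. r m w)"

definition is_greatest_rel :: "('a \<Rightarrow> 'a \<Rightarrow> bool) \<Rightarrow> 'a set \<Rightarrow> 'a \<Rightarrow> bool" where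
  "is_greatest_rel r A m \<longleftrightarrow> m \<in> A \<and> (\<forall>w\<in>A. r w m)"

definition mixed_upper :: "('a \<Rightarrow> 'a \<Rightarrow> bool) \<Rightarrow> ('a \<Rightarrow> 'a \<Rightarrow> bool) \<Rightarrow> 'a \<Rightarrow> 'a \<Rightarrow> 'a" where
  "mixed_upper le sle x y = (THE m. is_least_rel le {w. sle x w \<and> le y w} m)"

definition mixed_lower :: "('a \<Rightarrow> 'a \<Rightarrow> bool) \<Rightarrow> ('a \<Rightarrow> 'a \<Rightarrow> bool) \<Rightarrow> 'a \<Rightarrow> 'a \<Rightarrow> 'a" where
  "mixed_lower le sle x y = (THE m. is_greatest_rel le {w. sle w x \<and> le w y} m)"

definition mixed_lattice_vector_space ::
  "('a::real_vector \<Rightarrow> 'a \<Rightarrow> bool) \<Rightarrow> ('a \<Rightarrow> 'a \<Rightarrow> bool) \<Rightarrow> bool" where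
  "mixed_lattice_vector_space le sle \<longleftrightarrow>
     ordered_vector_space le \<and> ordered_vector_space sle
     \<and> (\<forall>x y. \<exists>m. is_least_rel le {w. sle x w \<and> le y w} m)
     \<and> (\<forall>x y. \<exists>m. is_greatest_rel le {w. sle w x \<and> le w y} m)
     \<and> (\<forall>x y. sle x y \<longrightarrow> le x y)
     \<and> (\<forall>x y. sle 0 x \<and> sle 0 y \<longrightarrow>
           sle 0 (mixed_upper le sle x y) \<and> sle 0 (mixed_lower le sle x y))"

definition vector_topology :: "'a::real_vector topology \<Rightarrow> bool" where
  "vector_topology T \<longleftrightarrow> topspace T = UNIV
     \<and> continuous_map (prod_topology T T) T (\<lambda>(x, y). x + y)
     \<and> continuous_map (prod_topology euclideanreal T) T (\<lambda>(c, x). c *\<^sub>R x)"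

definition nbhd0 :: "'a::real_vector topology \<Rightarrow> 'a set \<Rightarrow> bool" where
  "nbhd0 T N \<longleftrightarrow> (\<exists>U. openin T U \<and> 0 \<in> U \<and> U \<subseteq> N)"

definition s_abs :: "('a::real_vector \<Rightarrow> 'a \<Rightarrow> bool) \<Rightarrow> ('a \<Rightarrow> 'a \<Rightarrow> bool) \<Rightarrow> 'a \<Rightarrow> 'a" where
  "s_abs le sle x = mixed_upper le sle 0 x + mixed_upper le sle 0 (- x)"

definition symmetric_solid :: "('a::real_vector \<Rightarrow> 'a \<Rightarrow> bool) \<Rightarrow> ('a \<Rightarrow> 'a \<Rightarrow> bool) \<Rightarrow> 'a set \<Rightarrow> bool" where
  "symmetric_solid le sle A \<longleftrightarrow>
     (\<forall>x y. x \<in> A \<and> le (s_abs le sle y) (s_abs le sle x) \<longrightarrow> y \<in> A)"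

definition le_full :: "('a \<Rightarrow> 'a \<Rightarrow> bool) \<Rightarrow> 'a set \<Rightarrow> bool" where
  "le_full le A \<longleftrightarrow> (\<forall>x y z. x \<in> A \<and> y \<in> A \<and> le y z \<and> le z x \<longrightarrow> z \<in> A)"

definition locally_symmetric_solid ::
  "'a::real_vector topology \<Rightarrow> ('a \<Rightarrow> 'a \<Rightarrow> bool) \<Rightarrow> ('a \<Rightarrow> 'a \<Rightarrow> bool) \<Rightarrow> bool" where
  "locally_symmetric_solid T le sle \<longleftrightarrow>
     (\<forall>N. nbhd0 T N \<longrightarrow> (\<exists>W. nbhd0 T W \<and> W \<subseteq> N \<and> symmetric_solid le sle W))"

definition locally_le_full :: "'a::real_vector topology \<Rightarrow> ('a \<Rightarrow> 'a \<Rightarrow> bool) \<Rightarrow> bool" where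
  "locally_le_full T le \<longleftrightarrow>
     (\<forall>N. nbhd0 T N \<longrightarrow> (\<exists>W. nbhd0 T W \<and> W \<subseteq> N \<and> le_full le W))"

definition locally_mixed_full ::
  "'a::real_vector topology \<Rightarrow> ('a \<Rightarrow> 'a \<Rightarrow> bool) \<Rightarrow> ('a \<Rightarrow> 'a \<Rightarrow> bool) \<Rightarrow> bool" where
  "locally_mixed_full T le sle \<longleftrightarrow>
     (\<forall>N. nbhd0 T N \<longrightarrow> (\<exists>W. nbhd0 T W \<and> W \<subseteq> N \<and>
        (\<forall>x y. y \<in> W \<and> sle 0 x \<and> le x y \<longrightarrow> x \<in> W)))"

definition continuous_at_zero2 :: "'a::real_vector topology \<Rightarrow> ('a \<Rightarrow> 'a \<Rightarrow> 'a) \<Rightarrow> bool" where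
  "continuous_at_zero2 T g \<longleftrightarrow>
     limitin T (\<lambda>(x, y). g x y) (g 0 0) (nhdsin (prod_topology T T) (0, 0))"

definition uniformly_continuous2 :: "'a::real_vector topology \<Rightarrow> ('a \<Rightarrow> 'a \<Rightarrow> 'a) \<Rightarrow> bool" where
  "uniformly_continuous2 T g \<longleftrightarrow>
     (\<forall>W. nbhd0 T W \<longrightarrow> (\<exists>U. nbhd0 T U \<and>
        (\<forall>x x' y y'. x - x' \<in> U \<and> y - y' \<in> U \<longrightarrow> g x y - g x' y' \<in> W)))"

end

theory Submission
  imports Defs
begin

text \<open>Both mixed lattice operations are governed by the upper part \<open>x\<^sup>u = 0 \<curlyvee> x\<close>:
  translation invariance gives \<open>x \<curlyvee> y = x + (y - x)\<^sup>u\<close> and \<open>x \<curlywedge> y = x + y - y \<curlyvee> x\<close>.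
  The estimate \<open>s(a\<^sup>u - b\<^sup>u) \<le> s(a - b)\<close> lets a symmetric-solid neighbourhood control
  the oscillation of \<open>x\<^sup>u\<close> uniformly, which yields (a) \<open>\<Rightarrow>\<close> (c).  Since \<open>-s(x) \<le> x \<le> s(x)\<close>,
  and \<open>s(z) \<le> s(x) + s(y)\<close> whenever \<open>y \<le> z \<le> x\<close>, symmetric-solid neighbourhoods
  produce \<open>(\<le>)\<close>-full ones and vice versa, the latter using continuity of \<open>x \<mapsto> x\<^sup>u\<close>
  at \<open>0\<close>.  Finally (c) \<open>\<Rightarrow>\<close> (d) because \<open>x \<curlywedge> y = x\<close> and \<open>x \<curlywedge> 0 = 0\<close> when \<open>0 \<preccurlyeq> x \<le> y\<close>.\<close>

locale mixed_lattice_space =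
  fixes le sle :: "'a::real_vector \<Rightarrow> 'a \<Rightarrow> bool"
  assumes mixed_lattice: "mixed_lattice_vector_space le sle"
begin

lemma le_refl: "le x x"
  and le_antisym: "le x y \<Longrightarrow> le y x \<Longrightarrow> x = y"
  and le_trans: "le x y \<Longrightarrow> le y z \<Longrightarrow> le x z"
  and le_add_right: "le x y \<Longrightarrow> le (x + z) (y + z)"
  and sle_refl: "sle x x"
  and sle_trans: "sle x y \<Longrightarrow> sle y z \<Longrightarrow> sle x z"
  and sle_add_right: "sle x y \<Longrightarrow> sle (x + z) (y + z)"
  and sle_imp_le: "sle x y \<Longrightarrow> le x y"
  using mixed_lattice
  unfolding mixed_lattice_vector_space_def ordered_vector_space_def partial_order_rel_def
  by meson+

lemma le_translate: "le a b \<Longrightarrow> b - a = d - c \<Longrightarrow> le c d"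
  using le_add_right[of a b "c - a"] by (simp add: algebra_simps)

lemma sle_translate: "sle a b \<Longrightarrow> b - a = d - c \<Longrightarrow> sle c d"
  using sle_add_right[of a b "c - a"] by (simp add: algebra_simps)

lemma le_add_mono: "le a b \<Longrightarrow> le c d \<Longrightarrow> le (a + c) (b + d)"
  by (metis le_add_right le_trans add.commute)

lemma sle_add_mono: "sle a b \<Longrightarrow> sle c d \<Longrightarrow> sle (a + c) (b + d)"
  by (metis sle_add_right sle_trans add.commute)

lemma le_imp_neg_le: "le a b \<Longrightarrow> le (- b) (- a)"
  by (erule le_translate) simp

abbreviation "mup \<equiv> mixed_upper le sle"
abbreviation "mlow \<equiv> mixed_lower le sle"

lemma mixed_upper_least: "is_least_rel le {w. sle x w \<and> le y w} (mup x y)"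
proof -
  obtain m where "is_least_rel le {w. sle x w \<and> le y w} m"
    using mixed_lattice unfolding mixed_lattice_vector_space_def by blast
  then have "\<exists>!m. is_least_rel le {w. sle x w \<and> le y w} m"
    using le_antisym unfolding is_least_rel_def by blast
  then show ?thesis unfolding mixed_upper_def by (rule theI')
qed

lemma mixed_lower_greatest: "is_greatest_rel le {w. sle w x \<and> le w y} (mlow x y)"
proof -
  obtain m where "is_greatest_rel le {w. sle w x \<and> le w y} m"
    using mixed_lattice unfolding mixed_lattice_vector_space_def by blast
  then have "\<exists>!m. is_greatest_rel le {w. sle w x \<and> le w y} m"
    using le_antisym unfolding is_greatest_rel_def by blast
  then show ?thesis unfolding mixed_lower_def by (rule theI')
qed

lemma mixed_upper_sle: "sle x (mup x y)"
  and mixed_upper_ge: "le y (mup x y)"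
  and mixed_upper_le: "sle x w \<Longrightarrow> le y w \<Longrightarrow> le (mup x y) w"
  using mixed_upper_least[of x y] unfolding is_least_rel_def by auto

lemma mixed_lower_sle: "sle (mlow x y) x"
  and mixed_lower_le: "le (mlow x y) y"
  and mixed_lower_ge: "sle w x \<Longrightarrow> le w y \<Longrightarrow> le w (mlow x y)"
  using mixed_lower_greatest[of x y] unfolding is_greatest_rel_def by auto

lemma mixed_upper_eqI:
  "sle x m \<Longrightarrow> le y m \<Longrightarrow> (\<And>w. sle x w \<Longrightarrow> le y w \<Longrightarrow> le m w) \<Longrightarrow> mup x y = m"
  by (rule le_antisym) (auto intro: mixed_upper_le mixed_upper_sle mixed_upper_ge)

lemma mixed_lower_eqI:
  "sle m x \<Longrightarrow> le m y \<Longrightarrow> (\<And>w. sle w x \<Longrightarrow> le w y \<Longrightarrow> le w m) \<Longrightarrow> mlow x y = m"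
  by (rule le_antisym) (auto intro: mixed_lower_ge mixed_lower_sle mixed_lower_le)

lemma mixed_upper_translate: "mup (x + z) (y + z) = mup x y + z"
proof (rule mixed_upper_eqI)
  show "sle (x + z) (mup x y + z)" by (rule sle_add_right[OF mixed_upper_sle])
  show "le (y + z) (mup x y + z)" by (rule le_add_right[OF mixed_upper_ge])
  fix w assume "sle (x + z) w" "le (y + z) w"
  then have "sle x (w - z)" "le y (w - z)"
    by (auto elim: sle_translate le_translate)
  then have "le (mup x y) (w - z)" by (rule mixed_upper_le)
  then show "le (mup x y + z) w" by (rule le_translate) simp
qed

lemma mixed_lower_eq_mixed_upper: "mlow x y = x + y - mup y x"
proof (rule mixed_lower_eqI)
  show "sle (x + y - mup y x) x" using mixed_upper_sle[of y x] by (rule sle_translate) simp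
  show "le (x + y - mup y x) y" using mixed_upper_ge[of x y] by (rule le_translate) simp
  fix w assume "sle w x" "le w y"
  then have "sle y (x + y - w)" "le x (x + y - w)"
    by (auto elim: sle_translate le_translate)
  then have "le (mup y x) (x + y - w)" by (rule mixed_upper_le)
  then show "le w (x + y - mup y x)" by (rule le_translate) simp
qed

abbreviation upper :: "'a \<Rightarrow> 'a" where "upper x \<equiv> mup 0 x"

lemma mixed_upper_eq_upper: "mup x y = x + upper (y - x)"
  using mixed_upper_translate[of 0 x "y - x"] by (simp add: algebra_simps)

lemma upper_sle_nonneg: "sle 0 (upper x)"
  by (rule mixed_upper_sle)

lemma upper_nonneg: "le 0 (upper x)"
  by (rule sle_imp_le[OF upper_sle_nonneg])

lemma upper_ge: "le x (upper x)"
  by (rule mixed_upper_ge)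

lemma upper_mono: "le x y \<Longrightarrow> le (upper x) (upper y)"
  by (rule mixed_upper_le[OF upper_sle_nonneg]) (rule le_trans[OF _ upper_ge])

lemma upper_sle_nonneg_eq: "sle 0 x \<Longrightarrow> upper x = x"
  by (rule mixed_upper_eqI) (auto intro: le_refl)

lemma upper_nonpos_eq: "le x 0 \<Longrightarrow> upper x = 0"
  by (rule mixed_upper_eqI) (auto intro: sle_refl sle_imp_le)

lemma upper_zero: "upper 0 = 0"
  by (rule upper_nonpos_eq[OF le_refl])

lemma upper_subadditive: "le (upper (a + b)) (upper a + upper b)"
  using sle_add_mono[OF upper_sle_nonneg upper_sle_nonneg, of a b]
  by (auto intro: mixed_upper_le le_add_mono upper_ge)

lemma upper_diff_le: "le (upper a - upper b) (upper (a - b))"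
  using upper_subadditive[of "a - b" b] by (rule le_translate) simp

abbreviation sabs :: "'a \<Rightarrow> 'a" where "sabs x \<equiv> s_abs le sle x"

lemma sabs_eq: "sabs x = upper x + upper (- x)"
  by (simp add: s_abs_def)

lemma sabs_sle_nonneg: "sle 0 (sabs x)"
  using sle_add_mono[OF upper_sle_nonneg upper_sle_nonneg] by (simp add: sabs_eq)

lemma sabs_minus: "sabs (- x) = sabs x"
  by (simp add: sabs_eq add.commute)

lemma sabs_sle_nonneg_eq:
  assumes "sle 0 w"
  shows "sabs w = w"
proof -
  have "le (- w) 0"
    using le_imp_neg_le[OF sle_imp_le[OF assms]] by simp
  then show ?thesis
    by (simp add: sabs_eq upper_sle_nonneg_eq[OF assms] upper_nonpos_eq)
qed

lemma sabs_idem: "sabs (sabs x) = sabs x"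
  by (rule sabs_sle_nonneg_eq[OF sabs_sle_nonneg])

lemma upper_le_sabs: "le (upper x) (sabs x)"
  using le_add_mono[OF le_refl upper_nonneg, of "upper x" "- x"] by (simp add: sabs_eq)

lemma upper_minus_le_sabs: "le (upper (- x)) (sabs x)"
  using le_add_mono[OF upper_nonneg[of x] le_refl[of "upper (- x)"]] by (simp add: sabs_eq)

lemma le_sabs: "le x (sabs x)"
  by (rule le_trans[OF upper_ge upper_le_sabs])

lemma minus_sabs_le: "le (- sabs x) x"
  using le_imp_neg_le[OF le_sabs[of "- x"]] by (simp add: sabs_minus)

lemma sabs_le_sabs_bounds: "le y z \<Longrightarrow> le z x \<Longrightarrow> le (sabs z) (sabs x + sabs y)"
  using le_add_mono[OF le_trans[OF upper_mono upper_le_sabs]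
      le_trans[OF upper_mono[OF le_imp_neg_le] upper_minus_le_sabs]]
  by (simp add: sabs_eq)

lemma sabs_upper_diff_le: "le (sabs (upper a - upper b)) (sabs (a - b))"
proof -
  have "le (upper (upper a - upper b)) (upper (a - b))"
    using upper_mono[OF upper_diff_le[of a b]] by (simp add: upper_sle_nonneg_eq[OF upper_sle_nonneg])
  moreover have "le (upper (- (upper a - upper b))) (upper (- (a - b)))"
    using upper_mono[OF upper_diff_le[of b a]] by (simp add: upper_sle_nonneg_eq[OF upper_sle_nonneg])
  ultimately show ?thesis using le_add_mono by (simp add: sabs_eq)
qed

lemma mixed_lower_sle_nonneg: "sle 0 x \<Longrightarrow> le x y \<Longrightarrow> mlow x y = x"
  by (rule mixed_lower_eqI) (auto intro: sle_refl sle_imp_le)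

lemma mixed_lower_sle_nonneg_zero: "sle 0 x \<Longrightarrow> mlow x 0 = 0"
  by (rule mixed_lower_eqI) (auto intro: le_refl)

lemma symmetric_solidD: "symmetric_solid le sle W \<Longrightarrow> x \<in> W \<Longrightarrow> le (sabs y) (sabs x) \<Longrightarrow> y \<in> W"
  unfolding symmetric_solid_def by blast

lemma symmetric_solid_minus: "symmetric_solid le sle W \<Longrightarrow> x \<in> W \<Longrightarrow> - x \<in> W"
  by (erule symmetric_solidD, assumption) (simp add: sabs_minus le_refl)

lemma symmetric_solid_sabs: "symmetric_solid le sle W \<Longrightarrow> x \<in> W \<Longrightarrow> sabs x \<in> W"
  by (erule symmetric_solidD, assumption) (simp add: sabs_idem le_refl)

definition solid_hull :: "'a set \<Rightarrow> 'a set" where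
  "solid_hull V = {y. \<exists>x\<in>V. le (sabs y) (sabs x)}"

lemma subset_solid_hull: "V \<subseteq> solid_hull V"
  unfolding solid_hull_def using le_refl by blast

lemma symmetric_solid_solid_hull: "symmetric_solid le sle (solid_hull V)"
  unfolding symmetric_solid_def solid_hull_def by (blast intro: le_trans)

definition full_hull :: "'a set \<Rightarrow> 'a set" where
  "full_hull V = {z. \<exists>x\<in>V. \<exists>y\<in>V. le y z \<and> le z x}"

lemma subset_full_hull: "V \<subseteq> full_hull V"
  unfolding full_hull_def using le_refl by blast

lemma le_full_full_hull: "le_full le (full_hull V)"
  unfolding le_full_def full_hull_def by (blast intro: le_trans)

definition mixed_full_hull :: "'a set \<Rightarrow> 'a set" where
  "mixed_full_hull V = V \<union> {x. sle 0 x \<and> (\<exists>y\<in>V. le x y)}"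

lemma subset_mixed_full_hull: "V \<subseteq> mixed_full_hull V"
  unfolding mixed_full_hull_def by blast

lemma mixed_full_mixed_full_hull:
  "\<forall>x y. y \<in> mixed_full_hull V \<and> sle 0 x \<and> le x y \<longrightarrow> x \<in> mixed_full_hull V"
  unfolding mixed_full_hull_def by (blast intro: le_trans)

end

lemma nbhd0_zero: "nbhd0 T N \<Longrightarrow> 0 \<in> N"
  unfolding nbhd0_def by blast

lemma nbhd0_mono: "nbhd0 T N \<Longrightarrow> N \<subseteq> M \<Longrightarrow> nbhd0 T M"
  unfolding nbhd0_def by blast

lemma nbhd0_Int: "nbhd0 T N \<Longrightarrow> nbhd0 T M \<Longrightarrow> nbhd0 T (N \<inter> M)"
  unfolding nbhd0_def by (metis Int_mono IntI openin_Int)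

lemma openin_prod_topologyE:
  assumes "openin (prod_topology X Y) S" "(a, b) \<in> S"
  obtains U V where "openin X U" "openin Y V" "a \<in> U" "b \<in> V" "U \<times> V \<subseteq> S"
  using openin_prod_topology_alt[THEN iffD1, OF assms(1), rule_format, OF assms(2)] by blast

lemma nbhd0_half:
  assumes "vector_topology T" "nbhd0 T N"
  shows "\<exists>V. nbhd0 T V \<and> (\<forall>x\<in>V. \<forall>y\<in>V. x + y \<in> N)"
proof -
  obtain U where U: "openin T U" "0 \<in> U" "U \<subseteq> N"
    using assms(2) unfolding nbhd0_def by blast
  have cont: "continuous_map (prod_topology T T) T (\<lambda>(x, y). x + y)"
    and top: "topspace T = UNIV"
    using assms(1) unfolding vector_topology_def by blast+
  define S where "S = {z \<in> topspace (prod_topology T T). (\<lambda>(x, y). x + y) z \<in> U}"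
  have "openin (prod_topology T T) S"
    unfolding S_def by (rule openin_continuous_map_preimage[OF cont U(1)])
  moreover have "(0, 0) \<in> S"
    using U(2) by (simp add: S_def top)
  ultimately obtain A B where AB: "openin T A" "openin T B" "0 \<in> A" "0 \<in> B" "A \<times> B \<subseteq> S"
    by (rule openin_prod_topologyE)
  then have "nbhd0 T (A \<inter> B)"
    unfolding nbhd0_def by (blast intro: openin_Int)
  moreover have "\<forall>x\<in>A \<inter> B. \<forall>y\<in>A \<inter> B. x + y \<in> N"
    using AB(5) U(3) by (auto simp: S_def)
  ultimately show ?thesis by blast
qed

lemma nbhd0_uminus:
  assumes "vector_topology T" "nbhd0 T N"
  shows "nbhd0 T {x. - x \<in> N}"
proof -
  obtain U where U: "openin T U" "0 \<in> U" "U \<subseteq> N"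
    using assms(2) unfolding nbhd0_def by blast
  have "continuous_map T (prod_topology euclideanreal T) (\<lambda>x. (-1::real, x))"
    unfolding continuous_map_pairwise by (simp add: o_def)
  then have "continuous_map T T ((\<lambda>(c, x). c *\<^sub>R x) \<circ> (\<lambda>x. (-1::real, x)))"
    using assms(1) unfolding vector_topology_def by (blast intro: continuous_map_compose)
  then have "continuous_map T T uminus"
    by (simp add: o_def)
  then have "openin T {x \<in> topspace T. - x \<in> U}"
    using U(1) by (rule openin_continuous_map_preimage)
  then have "openin T {x. - x \<in> U}"
    using assms(1) by (simp add: vector_topology_def)
  moreover have "{x. - x \<in> U} \<subseteq> {x. - x \<in> N}"
    using U(3) by blast
  ultimately show ?thesis
    unfolding nbhd0_def using U(2) by (intro exI[where x = "{x. - x \<in> U}"]) simp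
qed

lemma continuous_at_zero2_nbhd0:
  assumes "vector_topology T" "continuous_at_zero2 T g" "g 0 0 = 0" "nbhd0 T N"
  shows "\<exists>V. nbhd0 T V \<and> (\<forall>x\<in>V. \<forall>y\<in>V. g x y \<in> N)"
proof -
  obtain U where U: "openin T U" "0 \<in> U" "U \<subseteq> N"
    using assms(4) unfolding nbhd0_def by blast
  then have "\<forall>\<^sub>F z in nhdsin (prod_topology T T) (0, 0). (\<lambda>(x, y). g x y) z \<in> U"
    using assms(2,3) unfolding continuous_at_zero2_def limitin_def by simp
  then obtain S where S: "openin (prod_topology T T) S" "(0, 0) \<in> S"
      "\<forall>z\<in>S. (\<lambda>(x, y). g x y) z \<in> U"
    using assms(1) unfolding eventually_nhdsin vector_topology_def by auto
  obtain A B where AB: "openin T A" "openin T B" "0 \<in> A" "0 \<in> B" "A \<times> B \<subseteq> S"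
    using S(1,2) by (rule openin_prod_topologyE)
  then have "nbhd0 T (A \<inter> B)"
    unfolding nbhd0_def by (blast intro: openin_Int)
  moreover have "g x y \<in> N" if "x \<in> A" "y \<in> B" for x y
  proof -
    have "(x, y) \<in> S"
      using that AB(5) by blast
    then show ?thesis
      using S(3) U(3) by auto
  qed
  ultimately show ?thesis by blast
qed

lemma uniformly_continuous2_imp_continuous_at_zero2:
  assumes "vector_topology T" "uniformly_continuous2 T g" "g 0 0 = 0"
  shows "continuous_at_zero2 T g"
  unfolding continuous_at_zero2_def limitin_def
proof (intro conjI allI impI)
  show "g 0 0 \<in> topspace T"
    using assms(1) by (simp add: vector_topology_def)
  fix U assume "openin T U \<and> g 0 0 \<in> U"
  then have "nbhd0 T U"
    using assms(3) unfolding nbhd0_def by auto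
  then obtain V where V: "nbhd0 T V" "\<forall>x x' y y'. x - x' \<in> V \<and> y - y' \<in> V \<longrightarrow> g x y - g x' y' \<in> U"
    using assms(2) unfolding uniformly_continuous2_def by blast
  obtain V0 where V0: "openin T V0" "0 \<in> V0" "V0 \<subseteq> V"
    using V(1) unfolding nbhd0_def by blast
  have "\<forall>z\<in>V0 \<times> V0. (\<lambda>(x, y). g x y) z \<in> U"
    using V(2)[rule_format, of _ 0 _ 0] V0(3) assms(3) by auto
  moreover have "openin (prod_topology T T) (V0 \<times> V0)"
    using V0(1) by (simp add: openin_prod_Times_iff)
  ultimately show "\<forall>\<^sub>F z in nhdsin (prod_topology T T) (0, 0). (\<lambda>(x, y). g x y) z \<in> U"
    unfolding eventually_nhdsin using V0(2) by blast
qed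

locale topological_mixed_lattice_space = mixed_lattice_space le sle
  for le sle :: "'a::real_vector \<Rightarrow> 'a \<Rightarrow> bool" +
  fixes T :: "'a topology"
  assumes vector_topology: "vector_topology T"
begin

lemmas nbhd0_half = nbhd0_half[OF vector_topology]
  and nbhd0_uminus = nbhd0_uminus[OF vector_topology]

lemma nbhd0_symmetric: "nbhd0 T N \<Longrightarrow> nbhd0 T (N \<inter> {x. - x \<in> N})"
  by (intro nbhd0_Int nbhd0_uminus)

lemma locally_symmetric_solidD:
  "locally_symmetric_solid T le sle \<Longrightarrow> nbhd0 T N \<Longrightarrow>
    \<exists>W. nbhd0 T W \<and> W \<subseteq> N \<and> symmetric_solid le sle W"
  unfolding locally_symmetric_solid_def by blast

lemma uniformly_continuous2_mixed_upper:
  assumes "locally_symmetric_solid T le sle"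
  shows "uniformly_continuous2 T mup"
  unfolding uniformly_continuous2_def
proof (intro allI impI)
  fix N assume "nbhd0 T N"
  then obtain V where V: "nbhd0 T V" "\<forall>a\<in>V. \<forall>b\<in>V. a + b \<in> N"
    using nbhd0_half by blast
  then obtain V1 where V1: "nbhd0 T V1" "V1 \<subseteq> V" "symmetric_solid le sle V1"
    using assms locally_symmetric_solidD by blast
  then obtain V2 where V2: "nbhd0 T V2" "\<forall>a\<in>V2. \<forall>b\<in>V2. a + b \<in> V1"
    using nbhd0_half by blast
  then obtain U where U: "nbhd0 T U" "U \<subseteq> V2" "symmetric_solid le sle U"
    using assms locally_symmetric_solidD by blast
  have "mup x y - mup x' y' \<in> N" if h: "x - x' \<in> U" "y - y' \<in> U" for x x' y y'
  proof -
    have "x - x' + 0 \<in> V1"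
      using h(1) U(2) V2(2) nbhd0_zero[OF V2(1)] by blast
    then have "x - x' \<in> V"
      using V1(2) by auto
    moreover have "(y - y') + - (x - x') \<in> V1"
      using V2(2) h(2) U(2) symmetric_solid_minus[OF U(3) h(1)] by blast
    then have "(y - x) - (y' - x') \<in> V1"
      by (simp add: algebra_simps)
    then have "upper (y - x) - upper (y' - x') \<in> V1"
      by (rule symmetric_solidD[OF V1(3) _ sabs_upper_diff_le])
    then have "upper (y - x) - upper (y' - x') \<in> V"
      using V1(2) by blast
    moreover have "mup x y - mup x' y' = (x - x') + (upper (y - x) - upper (y' - x'))"
      by (simp add: mixed_upper_eq_upper[of x y] mixed_upper_eq_upper[of x' y'] algebra_simps)
    ultimately show ?thesis using V(2) by simp
  qed
  then show "\<exists>U. nbhd0 T U \<and> (\<forall>x x' y y'. x - x' \<in> U \<and> y - y' \<in> U \<longrightarrow> mup x y - mup x' y' \<in> N)"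
    using U(1) by blast
qed

lemma uniformly_continuous2_mixed_lower:
  assumes "uniformly_continuous2 T mup"
  shows "uniformly_continuous2 T mlow"
  unfolding uniformly_continuous2_def
proof (intro allI impI)
  fix N assume "nbhd0 T N"
  then obtain V where V: "nbhd0 T V" "\<forall>a\<in>V. \<forall>b\<in>V. a + b \<in> N"
    using nbhd0_half by blast
  obtain V' where V': "nbhd0 T V'" "\<forall>a\<in>V'. \<forall>b\<in>V'. a + b \<in> V"
    using nbhd0_half[OF V(1)] by blast
  obtain U where U: "nbhd0 T U"
    "\<forall>x x' y y'. x - x' \<in> U \<and> y - y' \<in> U \<longrightarrow> mup x y - mup x' y' \<in> {z. - z \<in> V}"
    using assms nbhd0_uminus[OF V(1)] unfolding uniformly_continuous2_def by blast
  have "mlow x y - mlow x' y' \<in> N" if h: "x - x' \<in> U \<inter> V'" "y - y' \<in> U \<inter> V'" for x x' y y'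
  proof -
    have "(x - x') + (y - y') \<in> V" "- (mup y x - mup y' x') \<in> V"
      using h V'(2) U(2) by blast+
    moreover have "mlow x y - mlow x' y' = ((x - x') + (y - y')) + - (mup y x - mup y' x')"
      by (simp add: mixed_lower_eq_mixed_upper algebra_simps)
    ultimately show ?thesis using V(2) by simp
  qed
  then show "\<exists>U. nbhd0 T U \<and> (\<forall>x x' y y'. x - x' \<in> U \<and> y - y' \<in> U \<longrightarrow> mlow x y - mlow x' y' \<in> N)"
    using nbhd0_Int[OF U(1) V'(1)] by blast
qed

lemma locally_le_full_if_locally_symmetric_solid:
  assumes "locally_symmetric_solid T le sle"
  shows "locally_le_full T le"
  unfolding locally_le_full_def
proof (intro allI impI)
  fix N assume "nbhd0 T N"
  then obtain W where W: "nbhd0 T W" "W \<subseteq> N" "symmetric_solid le sle W"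
    using assms locally_symmetric_solidD by blast
  then obtain V where V: "nbhd0 T V" "\<forall>a\<in>V. \<forall>b\<in>V. a + b \<in> W"
    using nbhd0_half by blast
  then obtain V' where V': "nbhd0 T V'" "V' \<subseteq> V" "symmetric_solid le sle V'"
    using assms locally_symmetric_solidD by blast
  have "z \<in> N" if z: "z \<in> full_hull V'" for z
  proof -
    obtain x y where xy: "x \<in> V'" "y \<in> V'" "le y z" "le z x"
      using z unfolding full_hull_def by blast
    have "sabs x \<in> V" "sabs y \<in> V"
      using symmetric_solid_sabs[OF V'(3)] xy(1,2) V'(2) by blast+
    then have "sabs x + sabs y \<in> W"
      using V(2) by blast
    moreover have "le (sabs z) (sabs (sabs x + sabs y))"
      using sabs_le_sabs_bounds[OF xy(3,4)]
      by (simp add: sabs_sle_nonneg_eq sle_add_mono[OF sabs_sle_nonneg sabs_sle_nonneg, simplified])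
    ultimately have "z \<in> W"
      by (rule symmetric_solidD[OF W(3)])
    then show "z \<in> N"
      using W(2) by blast
  qed
  then show "\<exists>W. nbhd0 T W \<and> W \<subseteq> N \<and> le_full le W"
    by (intro exI[of _ "full_hull V'"] conjI subsetI le_full_full_hull
        nbhd0_mono[OF V'(1) subset_full_hull])
qed

lemma locally_symmetric_solid_if_locally_le_full:
  assumes "locally_le_full T le" "continuous_at_zero2 T mup"
  shows "locally_symmetric_solid T le sle"
  unfolding locally_symmetric_solid_def
proof (intro allI impI)
  fix N assume "nbhd0 T N"
  then obtain W where W: "nbhd0 T W" "W \<subseteq> N" "le_full le W"
    using assms(1) unfolding locally_le_full_def by blast
  obtain W1 where W1: "nbhd0 T W1" "\<forall>a\<in>W1. \<forall>b\<in>W1. a + b \<in> W \<inter> {x. - x \<in> W}"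
    using nbhd0_half[OF nbhd0_symmetric[OF W(1)]] by blast
  obtain V where V: "nbhd0 T V" "\<forall>x\<in>V. \<forall>y\<in>V. mup x y \<in> W1"
    using continuous_at_zero2_nbhd0[OF vector_topology assms(2) upper_zero W1(1)] by blast
  have "y \<in> N" if y: "y \<in> solid_hull (V \<inter> {x. - x \<in> V})" for y
  proof -
    obtain x where x: "x \<in> V" "- x \<in> V" "le (sabs y) (sabs x)"
      using y unfolding solid_hull_def by blast
    then have "upper x \<in> W1" "upper (- x) \<in> W1"
      using V(2) nbhd0_zero[OF V(1)] by blast+
    then have "sabs x \<in> W" "- sabs x \<in> W"
      using W1(2) by (simp_all add: sabs_eq)
    moreover have "le (- sabs x) y" "le y (sabs x)"
      using le_trans[OF le_imp_neg_le[OF x(3)] minus_sabs_le] le_trans[OF le_sabs x(3)] .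
    ultimately show "y \<in> N"
      using W(2,3) unfolding le_full_def by blast
  qed
  then show "\<exists>W. nbhd0 T W \<and> W \<subseteq> N \<and> symmetric_solid le sle W"
    by (intro exI[of _ "solid_hull (V \<inter> {x. - x \<in> V})"] conjI subsetI symmetric_solid_solid_hull
        nbhd0_mono[OF nbhd0_symmetric[OF V(1)] subset_solid_hull])
qed

lemma locally_mixed_full_if_uniformly_continuous2:
  assumes "uniformly_continuous2 T mlow"
  shows "locally_mixed_full T le sle"
  unfolding locally_mixed_full_def
proof (intro allI impI)
  fix N assume N: "nbhd0 T N"
  then obtain U where U: "nbhd0 T U"
    "\<forall>x x' y y'. x - x' \<in> U \<and> y - y' \<in> U \<longrightarrow> mlow x y - mlow x' y' \<in> N"
    using assms unfolding uniformly_continuous2_def by blast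
  have "x \<in> N" if x: "x \<in> mixed_full_hull (U \<inter> N)" for x
  proof (cases "x \<in> U \<inter> N")
    case False
    then obtain y where "sle 0 x" "le x y" "y \<in> U"
      using x unfolding mixed_full_hull_def by blast
    then show ?thesis
      using U(2)[rule_format, of x x y 0] nbhd0_zero[OF U(1)]
      by (simp add: mixed_lower_sle_nonneg mixed_lower_sle_nonneg_zero)
  qed simp
  then show "\<exists>W. nbhd0 T W \<and> W \<subseteq> N \<and> (\<forall>x y. y \<in> W \<and> sle 0 x \<and> le x y \<longrightarrow> x \<in> W)"
    by (intro exI[of _ "mixed_full_hull (U \<inter> N)"] conjI subsetI mixed_full_mixed_full_hull
        nbhd0_mono[OF nbhd0_Int[OF U(1) N] subset_mixed_full_hull])
qed

lemma continuous_at_zero2_mixed_operations: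
  assumes "uniformly_continuous2 T mup" "uniformly_continuous2 T mlow"
  shows "continuous_at_zero2 T mup" "continuous_at_zero2 T mlow"
  using assms uniformly_continuous2_imp_continuous_at_zero2[OF vector_topology]
  by (simp_all add: mixed_lower_eq_mixed_upper upper_zero)

end

theorem theorem3p12:
  fixes T :: "'a::real_vector topology"
    and le sle :: "'a \<Rightarrow> 'a \<Rightarrow> bool"
  assumes "mixed_lattice_vector_space le sle"
    and "vector_topology T"
  defines "A \<equiv> locally_symmetric_solid T le sle"
    and "B \<equiv> locally_le_full T le
              \<and> continuous_at_zero2 T (mixed_upper le sle)
              \<and> continuous_at_zero2 T (mixed_lower le sle)"
    and "C \<equiv> uniformly_continuous2 T (mixed_upper le sle)
              \<and> uniformly_continuous2 T (mixed_lower le sle)"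
    and "D \<equiv> locally_mixed_full T le sle
              \<and> continuous_at_zero2 T (mixed_upper le sle)
              \<and> continuous_at_zero2 T (mixed_lower le sle)"
  shows "(A \<longleftrightarrow> B) \<and> (A \<longrightarrow> C) \<and> (B \<longrightarrow> C) \<and> (C \<longrightarrow> D)"
proof -
  interpret topological_mixed_lattice_space le sle T
    using assms(1,2) by (intro topological_mixed_lattice_space.intro
        mixed_lattice_space.intro topological_mixed_lattice_space_axioms.intro)
  have AC: "A \<longrightarrow> C"
    unfolding A_def C_def
    using uniformly_continuous2_mixed_upper uniformly_continuous2_mixed_lower by blast
  have CD: "C \<longrightarrow> D"
    unfolding C_def D_def
    using locally_mixed_full_if_uniformly_continuous2 continuous_at_zero2_mixed_operations by blast
  have AB: "A \<longrightarrow> B"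
    using AC CD locally_le_full_if_locally_symmetric_solid unfolding A_def B_def D_def by blast
  have BA: "B \<longrightarrow> A"
    unfolding A_def B_def using locally_symmetric_solid_if_locally_le_full by blast
  show ?thesis using AC AB BA CD by blast
qed

end
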